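(* Every $n\times n$ Gram-Lorentz matrix $X$ is completely positive semidefinite, and $$\mathrm{cpsd}\text{-}\mathrm{rank}(X)\le 2^{\lfloor(\mathrm{rank}(X)+1)/2\rfloor}.$$
   Context: The $m$-dimensional Lorentz cone is $\mathcal{L}_m:=\{(c,x)\in\mathbb{R}\times\mathbb{R}^{m-1}: c\ge\|x\|\}$. An $n\times n$ real symmetric matrix $X$ is Gram-Lorentz if there exist $m\ge1$ and vectors $\ell_1,\dots,\ell_n\in\mathcal{L}_m$ with $X_{ij}=\langle\ell_i,\ell_j\rangle$ for all $i,j$. An $n\times n$ matrix $X$ is completely positive semidefinite (cpsd) if there exist $d\ge1$ and Hermitian positive semidefinite $d\times d$ matrices $P_1,\dots,P_n$ with $X_{ij}=\mathrm{Tr}(P_iP_j)$ for all $i,j$; the cpsd-rank of $X$ is the least such $d$. *)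

theory Defs
  imports Complex_Main "Jordan_Normal_Form.DL_Rank" "Jordan_Normal_Form.Schur_Decomposition"
begin

text \<open>The m-dimensional Lorentz cone, vectors in R^m given as JNF vectors of dimension m;
  coordinate 0 is c, coordinates 1..m-1 are x.\<close>
definition lorentz_cone :: "nat \<Rightarrow> real vec set" where
  "lorentz_cone m = {l. l \<in> carrier_vec m \<and> 0 < m \<and>
      sqrt (\<Sum>i\<in>{1..<m}. (l $ i)^2) \<le> l $ 0}"

definition gram_lorentz :: "nat \<Rightarrow> real mat \<Rightarrow> bool" where
  "gram_lorentz n X \<longleftrightarrow> X \<in> carrier_mat n n \<and> X = transpose_mat X \<and>
     (\<exists>m \<ge> 1. \<exists>l :: nat \<Rightarrow> real vec.
        (\<forall>i<n. l i \<in> lorentz_cone m) \<and>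
        (\<forall>i<n. \<forall>j<n. X $$ (i,j) = l i \<bullet> l j))"

definition herm_psd :: "nat \<Rightarrow> complex mat \<Rightarrow> bool" where
  "herm_psd d P \<longleftrightarrow> P \<in> carrier_mat d d \<and>
     (\<forall>i<d. \<forall>j<d. P $$ (i,j) = cnj (P $$ (j,i))) \<and>
     (\<forall>v \<in> carrier_vec d. 0 \<le> Re (\<Sum>i<d. \<Sum>j<d. cnj (v $ i) * P $$ (i,j) * v $ j))"

definition cpsd_factor :: "nat \<Rightarrow> nat \<Rightarrow> real mat \<Rightarrow> bool" where
  "cpsd_factor n d X \<longleftrightarrow> 1 \<le> d \<and> (\<exists>P :: nat \<Rightarrow> complex mat.
      (\<forall>i<n. herm_psd d (P i)) \<and>
      (\<forall>i<n. \<forall>j<n. complex_of_real (X $$ (i,j)) = (\<Sum>k<d. (P i * P j) $$ (k,k))))"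

definition cpsd :: "nat \<Rightarrow> real mat \<Rightarrow> bool" where
  "cpsd n X \<longleftrightarrow> X \<in> carrier_mat n n \<and> (\<exists>d. cpsd_factor n d X)"

definition cpsd_rank :: "nat \<Rightarrow> real mat \<Rightarrow> nat" where
  "cpsd_rank n X = (LEAST d. cpsd_factor n d X)"

end

theory Submission
  imports Defs
begin

text \<open>Write the Lorentz vectors as \<open>\<ell>\<^sub>i = (c\<^sub>i, x\<^sub>i)\<close> with \<open>\<parallel>x\<^sub>i\<parallel> \<le> c\<^sub>i\<close>. The vectors \<open>\<ell>\<^sub>i\<close> lie in
  the span of \<open>r = rank X\<close> of them, so the spatial parts \<open>x\<^sub>i\<close> can be replaced by vectors
  \<open>y\<^sub>i \<in> \<real>\<^sup>r\<close> with the same inner products. For \<open>p = \<lceil>r/2\<rceil>\<close> the Jordan--Wigner construction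
  gives \<open>2p\<close> traceless Hermitian \<open>2\<^sup>p \<times> 2\<^sup>p\<close> matrices \<open>G\<^sub>t\<close> with \<open>G\<^sub>s G\<^sub>t + G\<^sub>t G\<^sub>s = 2 \<delta>\<^sub>s\<^sub>t I\<close>.
  Put \<open>P\<^sub>i = (c\<^sub>i I + \<Sum>\<^sub>t y\<^sub>i\<^sub>t G\<^sub>t) / \<surd>2\<^sup>p\<close>. Since \<open>(\<Sum>\<^sub>t y\<^sub>i\<^sub>t G\<^sub>t)\<^sup>2 = \<parallel>y\<^sub>i\<parallel>\<^sup>2 I\<close>, the eigenvalues of
  the sum are \<open>\<plusminus>\<parallel>y\<^sub>i\<parallel> \<ge> -c\<^sub>i\<close>, so \<open>P\<^sub>i\<close> is positive semidefinite, and
  \<open>tr (P\<^sub>i P\<^sub>j) = c\<^sub>i c\<^sub>j + \<langle>y\<^sub>i, y\<^sub>j\<rangle> = X\<^sub>i\<^sub>j\<close>.\<close>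

section \<open>Gram matrices of low rank\<close>

lemma column_space_basis:
  fixes X :: "real mat"
  assumes X: "X \<in> carrier_mat n n"
  obtains S where "finite S" "S \<subseteq> set (cols X)" "card S = vec_space.rank n X"
    and "\<And>i. i < n \<Longrightarrow> \<exists>a. \<forall>k<n. X $$ (k, i) = (\<Sum>v\<in>S. a v * v $ k)"
proof -
  interpret V: vec_space "TYPE(real)" n .
  have cols_carrier: "set (cols X) \<subseteq> carrier_vec n" using X cols_dim by blast
  obtain S where S: "maximal S (\<lambda>T. T \<subseteq> set (cols X) \<and> V.lin_indpt T)"
    using maximal_exists[of "\<lambda>T. T \<subseteq> set (cols X) \<and> V.lin_indpt T" "card (set (cols X))" "{}"]
    by (meson List.finite_set card_mono empty_iff empty_subsetI V.finite_lin_indpt2 rev_finite_subset)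
  have rank: "V.rank X = card S" using V.rank_card_indpt[OF X S] .
  have S_cols: "S \<subseteq> set (cols X)" and S_indpt: "V.lin_indpt S" using S unfolding maximal_def by auto
  have S_fin: "finite S" using S_cols finite_subset by blast
  have S_carrier: "S \<subseteq> carrier_vec n" using S_cols cols_carrier by blast
  have in_span: "v \<in> V.span S" if v: "v \<in> set (cols X)" for v
  proof (cases "v \<in> S")
    case True
    then show ?thesis using V.span_mem[OF S_carrier] by auto
  next
    case False
    have "\<not> V.lin_indpt (S \<union> {v})"
    proof
      assume "V.lin_indpt (S \<union> {v})"
      then have "S \<union> {v} = S" using S v S_cols unfolding maximal_def by blast
      then show False using False by blast
    qed
    then show ?thesis using V.lin_dep_iff_in_span[OF S_carrier S_indpt _ False] v cols_carrier by auto
  qed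
  have "\<exists>a. \<forall>k<n. X $$ (k, i) = (\<Sum>v\<in>S. a v * v $ k)" if i: "i < n" for i
  proof -
    have "col X i \<in> set (cols X)" using i X by (simp add: cols_def)
    then obtain a where a: "V.lincomb a S = col X i"
      using V.finite_in_span[OF S_fin _ in_span] S_carrier by auto
    have "X $$ (k, i) = (\<Sum>v\<in>S. a v * v $ k)" if k: "k < n" for k
    proof -
      have "X $$ (k, i) = V.lincomb a S $ k" using a X i k by simp
      also have "\<dots> = (\<Sum>v\<in>S. a v * v $ k)" using V.lincomb_index[OF k S_carrier] .
      finally show ?thesis .
    qed
    then show ?thesis by blast
  qed
  with S_fin S_cols rank that show ?thesis by simp
qed

lemma rank_many_columns_span:
  fixes X :: "real mat"
  assumes X: "X \<in> carrier_mat n n"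
  obtains f :: "nat \<Rightarrow> nat" and \<alpha> :: "nat \<Rightarrow> nat \<Rightarrow> real"
  where "\<And>t. t < vec_space.rank n X \<Longrightarrow> f t < n"
    and "\<And>i k. i < n \<Longrightarrow> k < n \<Longrightarrow>
           X $$ (k, i) = (\<Sum>t<vec_space.rank n X. \<alpha> i t * X $$ (k, f t))"
proof -
  let ?r = "vec_space.rank n X"
  obtain S where S_fin: "finite S" and S_cols: "S \<subseteq> set (cols X)" and card: "card S = ?r"
    and span: "\<And>i. i < n \<Longrightarrow> \<exists>a. \<forall>k<n. X $$ (k, i) = (\<Sum>v\<in>S. a v * v $ k)"
    using column_space_basis[OF X] by blast
  obtain h where h: "bij_betw h {..<?r} S"
    using ex_bij_betw_nat_finite[OF S_fin] card by (auto simp: atLeast0LessThan)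
  have "\<exists>j. t < ?r \<longrightarrow> j < n \<and> h t = col X j" for t
  proof -
    have "t < ?r \<Longrightarrow> h t \<in> set (cols X)" using h S_cols bij_betwE by blast
    then show ?thesis using X by (auto simp: in_set_conv_nth) metis
  qed
  then obtain f where f: "\<And>t. t < ?r \<Longrightarrow> f t < n \<and> h t = col X (f t)" by metis
  have "\<exists>\<alpha>. \<forall>k<n. X $$ (k, i) = (\<Sum>t<?r. \<alpha> t * X $$ (k, f t))" if i: "i < n" for i
  proof -
    obtain a where a: "\<And>k. k < n \<Longrightarrow> X $$ (k, i) = (\<Sum>v\<in>S. a v * v $ k)" using span[OF i] by blast
    have "X $$ (k, i) = (\<Sum>t<?r. (a \<circ> h) t * X $$ (k, f t))" if k: "k < n" for k
    proof -
      have "X $$ (k, i) = (\<Sum>t<?r. a (h t) * h t $ k)"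
        using a[OF k] sum.reindex_bij_betw[OF h, of "\<lambda>v. a v * v $ k"] by simp
      also have "\<dots> = (\<Sum>t<?r. (a \<circ> h) t * X $$ (k, f t))"
        using f X k by (intro sum.cong refl) auto
      finally show ?thesis .
    qed
    then show ?thesis by blast
  qed
  then obtain \<alpha> where "\<And>i k. i < n \<Longrightarrow> k < n \<Longrightarrow> X $$ (k, i) = (\<Sum>t<?r. \<alpha> i t * X $$ (k, f t))"
    by metis
  with f that show ?thesis by blast
qed

lemma sum_lessThan_single:
  fixes f :: "nat \<Rightarrow> 'a::comm_monoid_add"
  assumes "t < k" and "\<And>s. s < k \<Longrightarrow> s \<noteq> t \<Longrightarrow> f s = 0"
  shows "(\<Sum>s<k. f s) = f t"
  using assms by (subst sum.mono_neutral_right[of "{..<k}" "{t}"]) auto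

lemma sum_squares_eq_0_imp:
  fixes f :: "nat \<Rightarrow> real"
  assumes "(\<Sum>a<m. f a * f a) = 0" and "a < m"
  shows "f a = 0"
  using assms sum_nonneg_eq_0_iff[of "{..<m}" "\<lambda>a. f a * f a"] by auto

text \<open>The difference of the two sides is orthogonal to every \<open>L k\<close>, hence to itself.\<close>

lemma gram_determines_combination:
  fixes L :: "nat \<Rightarrow> nat \<Rightarrow> real"
  assumes f: "\<And>t. t < r \<Longrightarrow> f t < n" and i: "i < n"
    and gram: "\<And>k. k < n \<Longrightarrow>
      (\<Sum>a<m. L k a * L i a) = (\<Sum>t<r. \<alpha> t * (\<Sum>a<m. L k a * L (f t) a))"
    and a: "a < m"
  shows "L i a = (\<Sum>t<r. \<alpha> t * L (f t) a)"
proof -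
  define D where "D a = L i a - (\<Sum>t<r. \<alpha> t * L (f t) a)" for a
  have orth: "(\<Sum>a<m. L k a * D a) = 0" if k: "k < n" for k
  proof -
    have "(\<Sum>a<m. L k a * D a)
        = (\<Sum>a<m. L k a * L i a) - (\<Sum>a<m. \<Sum>t<r. \<alpha> t * (L k a * L (f t) a))"
      unfolding D_def by (simp add: algebra_simps sum_subtractf sum_distrib_left)
    also have "(\<Sum>a<m. \<Sum>t<r. \<alpha> t * (L k a * L (f t) a))
             = (\<Sum>t<r. \<alpha> t * (\<Sum>a<m. L k a * L (f t) a))"
      by (subst sum.swap) (simp add: sum_distrib_left)
    finally show ?thesis using gram[OF k] by simp
  qed
  have "(\<Sum>a<m. D a * D a)
      = (\<Sum>a<m. L i a * D a) - (\<Sum>a<m. \<Sum>t<r. \<alpha> t * (L (f t) a * D a))"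
    by (simp add: D_def algebra_simps sum_subtractf sum_distrib_left sum_distrib_right)
  also have "(\<Sum>a<m. \<Sum>t<r. \<alpha> t * (L (f t) a * D a)) = (\<Sum>t<r. \<alpha> t * (\<Sum>a<m. L (f t) a * D a))"
    by (subst sum.swap) (simp add: sum_distrib_left)
  also have "\<dots> = 0" using orth f by simp
  finally have "(\<Sum>a<m. D a * D a) = 0" using orth[OF i] by simp
  then show ?thesis using sum_squares_eq_0_imp[OF _ a] unfolding D_def by fastforce
qed

lemma gram_vectors_span_by_rank_many:
  fixes X :: "real mat" and L :: "nat \<Rightarrow> nat \<Rightarrow> real"
  assumes X: "X \<in> carrier_mat n n"
    and XL: "\<And>i j. i < n \<Longrightarrow> j < n \<Longrightarrow> X $$ (i, j) = (\<Sum>a<m. L i a * L j a)"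
  obtains f :: "nat \<Rightarrow> nat" and \<alpha> :: "nat \<Rightarrow> nat \<Rightarrow> real"
  where "\<And>t. t < vec_space.rank n X \<Longrightarrow> f t < n"
    and "\<And>i a. i < n \<Longrightarrow> a < m \<Longrightarrow> L i a = (\<Sum>t<vec_space.rank n X. \<alpha> i t * L (f t) a)"
proof -
  let ?r = "vec_space.rank n X"
  obtain f \<alpha> where f: "\<And>t. t < ?r \<Longrightarrow> f t < n"
    and cols: "\<And>i k. i < n \<Longrightarrow> k < n \<Longrightarrow> X $$ (k, i) = (\<Sum>t<?r. \<alpha> i t * X $$ (k, f t))"
    using rank_many_columns_span[OF X] by blast
  have "L i a = (\<Sum>t<?r. \<alpha> i t * L (f t) a)" if i: "i < n" and a: "a < m" for i a
  proof (rule gram_determines_combination[OF f i _ a])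
    fix k assume k: "k < n"
    have "(\<Sum>a<m. L k a * L i a) = X $$ (k, i)" using XL k i by simp
    also have "\<dots> = (\<Sum>t<?r. \<alpha> i t * X $$ (k, f t))" using cols i k by simp
    also have "\<dots> = (\<Sum>t<?r. \<alpha> i t * (\<Sum>a<m. L k a * L (f t) a))" using XL f k by simp
    finally show "(\<Sum>a<m. L k a * L i a) = (\<Sum>t<?r. \<alpha> i t * (\<Sum>a<m. L k a * L (f t) a))" .
  qed
  with f that show ?thesis by blast
qed

text \<open>For \<open>u = 0\<close> the division by zero makes the coefficient \<open>0\<close>, which is harmless since
  \<open>u\<close> then contributes nothing.\<close>

definition proj_coef :: "nat \<Rightarrow> (nat \<Rightarrow> real) \<Rightarrow> (nat \<Rightarrow> real) \<Rightarrow> real"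
  where "proj_coef m v u = (\<Sum>a<m. v a * u a) / (\<Sum>a<m. u a * u a)"

lemma gram_schmidt_residual_orthogonal:
  fixes u :: "nat \<Rightarrow> nat \<Rightarrow> real"
  assumes orth: "\<And>s t. s < k \<Longrightarrow> t < k \<Longrightarrow> s \<noteq> t \<Longrightarrow> (\<Sum>a<m. u s a * u t a) = 0"
    and t: "t < k"
  shows "(\<Sum>a<m. (v a - (\<Sum>s<k. proj_coef m v (u s) * u s a)) * u t a) = 0"
proof -
  have "(\<Sum>a<m. (v a - (\<Sum>s<k. proj_coef m v (u s) * u s a)) * u t a)
      = (\<Sum>a<m. v a * u t a) - (\<Sum>a<m. \<Sum>s<k. proj_coef m v (u s) * (u s a * u t a))"
    by (simp add: algebra_simps sum_subtractf sum_distrib_left sum_distrib_right)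
  also have "(\<Sum>a<m. \<Sum>s<k. proj_coef m v (u s) * (u s a * u t a))
           = (\<Sum>s<k. proj_coef m v (u s) * (\<Sum>a<m. u s a * u t a))"
    by (subst sum.swap) (simp add: sum_distrib_left)
  also have "\<dots> = proj_coef m v (u t) * (\<Sum>a<m. u t a * u t a)"
    by (rule sum_lessThan_single[OF t]) (simp add: orth t)
  also have "(\<Sum>a<m. v a * u t a) - proj_coef m v (u t) * (\<Sum>a<m. u t a * u t a) = 0"
  proof (cases "(\<Sum>a<m. u t a * u t a) = 0")
    case True
    then have "\<And>a. a < m \<Longrightarrow> u t a = 0" using sum_squares_eq_0_imp by blast
    then show ?thesis using True by simp
  next
    case False
    then show ?thesis unfolding proj_coef_def by simp
  qed
  finally show ?thesis .
qed

lemma orthogonal_family_spanning: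
  fixes w :: "nat \<Rightarrow> nat \<Rightarrow> real"
  shows "\<exists>u \<gamma>. (\<forall>s<k. \<forall>t<k. s \<noteq> t \<longrightarrow> (\<Sum>a<m. u s a * u t a) = 0) \<and>
               (\<forall>j<k. \<forall>a<m. w j a = (\<Sum>t<k. \<gamma> j t * u t a))"
proof (induction k)
  case 0
  then show ?case by auto
next
  case (Suc k)
  then obtain u \<gamma>
    where orth: "\<And>s t. s < k \<Longrightarrow> t < k \<Longrightarrow> s \<noteq> t \<Longrightarrow> (\<Sum>a<m. u s a * u t a) = 0"
      and span: "\<And>j a. j < k \<Longrightarrow> a < m \<Longrightarrow> w j a = (\<Sum>t<k. \<gamma> j t * u t a)"
    by blast
  define new where "new a = w k a - (\<Sum>t<k. proj_coef m (w k) (u t) * u t a)" for a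
  define u' where "u' = u(k := new)"
  define \<gamma>' where "\<gamma>' j t = (if j < k then (if t < k then \<gamma> j t else 0)
                             else (if t < k then proj_coef m (w k) (u t) else 1))" for j t
  have new_orth: "(\<Sum>a<m. new a * u t a) = 0" if "t < k" for t
    unfolding new_def by (rule gram_schmidt_residual_orthogonal[OF orth that])
  show ?case
  proof (intro exI conjI allI impI)
    fix s t assume st: "s < Suc k" "t < Suc k" "s \<noteq> t"
    then consider "s = k" "t < k" | "s < k" "t = k" | "s < k" "t < k" by linarith
    then show "(\<Sum>a<m. u' s a * u' t a) = 0"
      by cases (use new_orth orth st in \<open>simp_all add: u'_def mult.commute\<close>)
  next
    fix j a assume j: "j < Suc k" and a: "a < m"
    show "w j a = (\<Sum>t<Suc k. \<gamma>' j t * u' t a)"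
    proof (cases "j = k")
      case True
      then show ?thesis by (simp add: \<gamma>'_def u'_def new_def)
    next
      case False
      then show ?thesis using j span[OF _ a] by (simp add: \<gamma>'_def u'_def)
    qed
  qed
qed

lemma inner_of_orthogonal_expansions:
  fixes u :: "nat \<Rightarrow> nat \<Rightarrow> real"
  assumes orth: "\<And>s t. s < k \<Longrightarrow> t < k \<Longrightarrow> s \<noteq> t \<Longrightarrow> (\<Sum>a<m. u s a * u t a) = 0"
    and x1: "\<And>a. a < m \<Longrightarrow> x1 a = (\<Sum>t<k. b1 t * u t a)"
    and x2: "\<And>a. a < m \<Longrightarrow> x2 a = (\<Sum>t<k. b2 t * u t a)"
  shows "(\<Sum>a<m. x1 a * x2 a) = (\<Sum>t<k. b1 t * b2 t * (\<Sum>a<m. u t a * u t a))"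
proof -
  have "(\<Sum>a<m. x1 a * x2 a) = (\<Sum>a<m. \<Sum>t<k. \<Sum>s<k. b1 t * b2 s * (u t a * u s a))"
    using x1 x2 by (simp add: sum_product algebra_simps)
  also have "\<dots> = (\<Sum>t<k. \<Sum>s<k. \<Sum>a<m. b1 t * b2 s * (u t a * u s a))"
    by (subst sum.swap) (intro sum.cong refl sum.swap)
  also have "\<dots> = (\<Sum>t<k. \<Sum>s<k. b1 t * b2 s * (\<Sum>a<m. u t a * u s a))"
    by (simp add: sum_distrib_left)
  also have "\<dots> = (\<Sum>t<k. b1 t * b2 t * (\<Sum>a<m. u t a * u t a))"
    by (intro sum.cong refl sum_lessThan_single) (auto simp: orth)
  finally show ?thesis .
qed

lemma gram_realization_in_dimension:
  fixes w v :: "nat \<Rightarrow> nat \<Rightarrow> real"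
  assumes w: "\<And>i a. i < n \<Longrightarrow> a < m \<Longrightarrow> w i a = (\<Sum>s<r. \<alpha> i s * v s a)"
  obtains y :: "nat \<Rightarrow> nat \<Rightarrow> real"
  where "\<And>i j. i < n \<Longrightarrow> j < n \<Longrightarrow> (\<Sum>a<m. w i a * w j a) = (\<Sum>t<r. y i t * y j t)"
proof -
  obtain u \<gamma> where orth: "\<And>s t. s < r \<Longrightarrow> t < r \<Longrightarrow> s \<noteq> t \<Longrightarrow> (\<Sum>a<m. u s a * u t a) = 0"
    and vu: "\<And>s a. s < r \<Longrightarrow> a < m \<Longrightarrow> v s a = (\<Sum>t<r. \<gamma> s t * u t a)"
    using orthogonal_family_spanning[of r m v] by blast
  define \<beta> where "\<beta> i t = (\<Sum>s<r. \<alpha> i s * \<gamma> s t)" for i t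
  have wu: "w i a = (\<Sum>t<r. \<beta> i t * u t a)" if i: "i < n" and a: "a < m" for i a
  proof -
    have "w i a = (\<Sum>s<r. \<Sum>t<r. \<alpha> i s * \<gamma> s t * u t a)"
      unfolding w[OF i a] using vu a by (simp add: sum_distrib_left mult.assoc)
    also have "\<dots> = (\<Sum>t<r. \<beta> i t * u t a)"
      unfolding \<beta>_def by (subst sum.swap) (simp add: sum_distrib_right)
    finally show ?thesis .
  qed
  define y where "y i t = \<beta> i t * sqrt (\<Sum>a<m. u t a * u t a)" for i t
  show ?thesis
  proof (rule that)
    fix i j assume ij: "i < n" "j < n"
    have "(\<Sum>a<m. w i a * w j a) = (\<Sum>t<r. \<beta> i t * \<beta> j t * (\<Sum>a<m. u t a * u t a))"
      by (rule inner_of_orthogonal_expansions[OF orth]) (use wu ij in auto)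
    also have "\<dots> = (\<Sum>t<r. y i t * y j t)"
      unfolding y_def by (intro sum.cong refl) (simp add: algebra_simps sum_nonneg)
    finally show "(\<Sum>a<m. w i a * w j a) = (\<Sum>t<r. y i t * y j t)" .
  qed
qed


lemma gram_lorentz_coordinates:
  fixes X :: "real mat"
  assumes "gram_lorentz n X"
  obtains m :: nat and L :: "nat \<Rightarrow> nat \<Rightarrow> real"
  where "X \<in> carrier_mat n n" and "1 \<le> m"
    and "\<And>i. i < n \<Longrightarrow> sqrt (\<Sum>a\<in>{1..<m}. (L i a)\<^sup>2) \<le> L i 0"
    and "\<And>i j. i < n \<Longrightarrow> j < n \<Longrightarrow> X $$ (i, j) = (\<Sum>a<m. L i a * L j a)"
proof -
  obtain m l where X: "X \<in> carrier_mat n n" and m: "m \<ge> 1"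
    and cone: "\<And>i. i < n \<Longrightarrow> l i \<in> lorentz_cone m"
    and Xl: "\<And>i j. i < n \<Longrightarrow> j < n \<Longrightarrow> X $$ (i, j) = l i \<bullet> l j"
    using assms unfolding gram_lorentz_def by blast
  show ?thesis
  proof (rule that[OF X m])
    show "sqrt (\<Sum>a\<in>{1..<m}. (l i $ a)\<^sup>2) \<le> l i $ 0" if "i < n" for i
      using cone[OF that] unfolding lorentz_cone_def by simp
    show "X $$ (i, j) = (\<Sum>a<m. l i $ a * l j $ a)" if "i < n" "j < n" for i j
      using Xl[OF that] cone[OF that(2)]
      unfolding scalar_prod_def lorentz_cone_def by (auto simp: atLeast0LessThan)
  qed
qed

lemma gram_lorentz_decomposition:
  fixes X :: "real mat"
  assumes "gram_lorentz n X"
  obtains c :: "nat \<Rightarrow> real" and y :: "nat \<Rightarrow> nat \<Rightarrow> real"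
  where "\<And>i j. i < n \<Longrightarrow> j < n \<Longrightarrow>
           X $$ (i, j) = c i * c j + (\<Sum>t<vec_space.rank n X. y i t * y j t)"
    and "\<And>i. i < n \<Longrightarrow> sqrt (\<Sum>t<vec_space.rank n X. (y i t)\<^sup>2) \<le> c i"
proof -
  let ?r = "vec_space.rank n X"
  obtain m :: nat and L :: "nat \<Rightarrow> nat \<Rightarrow> real" where X: "X \<in> carrier_mat n n" and m: "1 \<le> m"
    and cone: "\<And>i. i < n \<Longrightarrow> sqrt (\<Sum>a\<in>{1..<m}. (L i a)\<^sup>2) \<le> L i 0"
    and XL: "\<And>i j. i < n \<Longrightarrow> j < n \<Longrightarrow> X $$ (i, j) = (\<Sum>a<m. L i a * L j a)"
    using gram_lorentz_coordinates[OF assms] by blast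
  obtain f \<alpha> where f: "\<And>t. t < ?r \<Longrightarrow> f t < n"
    and L_span: "\<And>i a. i < n \<Longrightarrow> a < m \<Longrightarrow> L i a = (\<Sum>t<?r. \<alpha> i t * L (f t) a)"
    using gram_vectors_span_by_rank_many[OF X XL] by blast
  define x where "x i a = (if a = 0 then 0 else L i a)" for i a
  have "x i a = (\<Sum>t<?r. \<alpha> i t * x (f t) a)" if "i < n" "a < m" for i a
    using L_span[OF that] unfolding x_def by simp
  then obtain y where gram_x: "\<And>i j. i < n \<Longrightarrow> j < n \<Longrightarrow>
      (\<Sum>a<m. x i a * x j a) = (\<Sum>t<?r. y i t * y j t)"
    using gram_realization_in_dimension[where w = x and v = "\<lambda>t. x (f t)"] by blast
  show ?thesis
  proof (rule that[where c = "\<lambda>i. L i 0" and y = y])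
    fix i j assume ij: "i < n" "j < n"
    have "X $$ (i, j) = (\<Sum>a<m. (if a = 0 then L i 0 * L j 0 else 0) + x i a * x j a)"
      unfolding XL[OF ij] by (intro sum.cong refl) (auto simp: x_def)
    also have "\<dots> = L i 0 * L j 0 + (\<Sum>a<m. x i a * x j a)"
      using m by (simp add: sum.distrib)
    finally show "X $$ (i, j) = L i 0 * L j 0 + (\<Sum>t<?r. y i t * y j t)"
      using gram_x[OF ij] by simp
  next
    fix i assume i: "i < n"
    have "(\<Sum>a<m. x i a * x i a) = (\<Sum>a\<in>{1..<m}. (L i a)\<^sup>2)"
      by (rule sum.mono_neutral_cong_right) (auto simp: x_def power2_eq_square)
    then show "sqrt (\<Sum>t<?r. (y i t)\<^sup>2) \<le> L i 0"
      using gram_x[OF i i] cone[OF i] by (simp add: power2_eq_square)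
  qed
qed

section \<open>Clifford generators\<close>

text \<open>Square complex matrices are encoded as functions \<open>nat \<Rightarrow> nat \<Rightarrow> complex\<close>, a
  \<open>D \<times> D\<close> matrix being determined by its entries at indices below \<open>D\<close>; in \<open>kron D Q R\<close> the
  index \<open>a < 2 * D\<close> stands for the pair \<open>(a div D, a mod D)\<close>.\<close>

definition matmul :: "nat \<Rightarrow> (nat \<Rightarrow> nat \<Rightarrow> complex) \<Rightarrow> (nat \<Rightarrow> nat \<Rightarrow> complex) \<Rightarrow> nat \<Rightarrow> nat \<Rightarrow> complex"
  where "matmul D A B a e = (\<Sum>b<D. A a b * B b e)"

definition hermitian :: "(nat \<Rightarrow> nat \<Rightarrow> complex) \<Rightarrow> bool"
  where "hermitian A \<longleftrightarrow> (\<forall>a b. cnj (A a b) = A b a)"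

definition kron :: "nat \<Rightarrow> (nat \<Rightarrow> nat \<Rightarrow> complex) \<Rightarrow> (nat \<Rightarrow> nat \<Rightarrow> complex) \<Rightarrow> nat \<Rightarrow> nat \<Rightarrow> complex"
  where "kron D Q R a b = Q (a div D) (b div D) * R (a mod D) (b mod D)"

definition ident :: "nat \<Rightarrow> nat \<Rightarrow> complex"
  where "ident a b = (if a = b then 1 else 0)"

definition pauli_x :: "nat \<Rightarrow> nat \<Rightarrow> complex"
  where "pauli_x a b = (if a = 0 \<and> b = 1 then 1 else if a = 1 \<and> b = 0 then 1 else 0)"

definition pauli_y :: "nat \<Rightarrow> nat \<Rightarrow> complex"
  where "pauli_y a b = (if a = 0 \<and> b = 1 then -\<i> else if a = 1 \<and> b = 0 then \<i> else 0)"

definition pauli_z :: "nat \<Rightarrow> nat \<Rightarrow> complex"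
  where "pauli_z a b = (if a = 0 \<and> b = 0 then 1 else if a = 1 \<and> b = 1 then -1 else 0)"

text \<open>The Jordan--Wigner generators \<open>clifford_gen p t\<close>, \<open>t < 2 * p\<close>, of size \<open>2 ^ p\<close>.\<close>

fun clifford_gen :: "nat \<Rightarrow> nat \<Rightarrow> nat \<Rightarrow> nat \<Rightarrow> complex" where
  "clifford_gen 0 t = (\<lambda>a b. 0)"
| "clifford_gen (Suc p) t =
     kron (2 ^ p) (if t < 2 * p then pauli_z else if t = 2 * p then pauli_x else pauli_y)
                  (if t < 2 * p then clifford_gen p t else ident)"

lemma sum_lessThan_double:
  fixes g :: "nat \<Rightarrow> 'a::comm_monoid_add"
  shows "(\<Sum>b<2 * D. g b) = (\<Sum>b<D. g b) + (\<Sum>b<D. g (D + b))"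
proof -
  have "{..<2 * D} = {..<D} \<union> {D..<D + D}" by auto
  then have "(\<Sum>b<2 * D. g b) = sum g ({..<D} \<union> {D..<D + D})" by simp
  also have "\<dots> = (\<Sum>b<D. g b) + (\<Sum>b\<in>{D..<D + D}. g b)"
    by (rule sum.union_disjoint) auto
  also have "(\<Sum>b\<in>{D..<D + D}. g b) = (\<Sum>b<D. g (D + b))"
    using sum.shift_bounds_nat_ivl[of g 0 D D] by (simp add: atLeast0LessThan add.commute)
  finally show ?thesis .
qed

lemma matmul_kron:
  assumes "0 < D"
  shows "matmul (2 * D) (kron D Q1 R1) (kron D Q2 R2) a e =
     (Q1 (a div D) 0 * Q2 0 (e div D) + Q1 (a div D) 1 * Q2 1 (e div D)) *
     matmul D R1 R2 (a mod D) (e mod D)"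
  unfolding matmul_def sum_lessThan_double kron_def using assms
  by (simp add: algebra_simps sum_distrib_left sum.distrib)

lemma trace_kron:
  assumes "0 < D"
  shows "(\<Sum>a<2 * D. kron D Q R a a) = (Q 0 0 + Q 1 1) * (\<Sum>a<D. R a a)"
  unfolding sum_lessThan_double kron_def using assms
  by (simp add: algebra_simps sum_distrib_left sum.distrib)

lemma hermitian_kron: "hermitian Q \<Longrightarrow> hermitian R \<Longrightarrow> hermitian (kron D Q R)"
  unfolding hermitian_def kron_def by simp

lemma hermitian_ident_pauli: "hermitian ident" "hermitian pauli_x" "hermitian pauli_y" "hermitian pauli_z"
  unfolding hermitian_def ident_def pauli_x_def pauli_y_def pauli_z_def by auto

lemma hermitian_clifford_gen: "hermitian (clifford_gen p t)"
  by (induction p) (auto simp: hermitian_def[of "\<lambda>a b. 0"] hermitian_kron hermitian_ident_pauli)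

lemma matmul_ident_left: "a < D \<Longrightarrow> matmul D ident A a e = A a e"
proof -
  have "matmul D ident A a e = (\<Sum>b<D. if a = b then A b e else 0)"
    unfolding matmul_def ident_def by (rule sum.cong) auto
  then show "a < D \<Longrightarrow> ?thesis" by simp
qed

lemma matmul_ident_right: "e < D \<Longrightarrow> matmul D A ident a e = A a e"
proof -
  have "matmul D A ident a e = (\<Sum>b<D. if b = e then A a b else 0)"
    unfolding matmul_def ident_def by (rule sum.cong) auto
  then show "e < D \<Longrightarrow> ?thesis" by simp
qed

lemma trace_clifford_gen: "(\<Sum>a<2 ^ p. clifford_gen p t a a) = 0"
  by (cases p) (auto simp: trace_kron pauli_x_def pauli_y_def pauli_z_def)

lemma pauli_z_square:
  "i < 2 \<Longrightarrow> j < 2 \<Longrightarrow> pauli_z i 0 * pauli_z 0 j + pauli_z i 1 * pauli_z 1 j = ident i j"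
  by (auto simp: pauli_z_def ident_def dest!: less_2_cases)

lemma clifford_gen_anticommute:
  assumes "s < 2 * p" "t < 2 * p" "a < 2 ^ p" "e < 2 ^ p"
  shows "matmul (2 ^ p) (clifford_gen p s) (clifford_gen p t) a e
       + matmul (2 ^ p) (clifford_gen p t) (clifford_gen p s) a e
       = (if s = t \<and> a = e then 2 else 0)"
  using assms
proof (induction p arbitrary: s t a e)
  case 0
  then show ?case by simp
next
  case (Suc p)
  define D :: nat where "D = 2 ^ p"
  have D: "0 < D" and DD: "(2::nat) ^ Suc p = 2 * D" by (simp_all add: D_def)
  have div2: "a div D < 2" "e div D < 2" using Suc.prems DD by (auto simp: less_mult_imp_div_less)
  have mod: "a mod D < D" "e mod D < D" using D by auto
  have eq_divmod: "a = e \<longleftrightarrow> a div D = e div D \<and> a mod D = e mod D"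
    by (metis div_mult_mod_eq)
  show ?case
  proof (cases "s < 2 * p \<and> t < 2 * p")
    case True
    have z2: "pauli_z (a div D) 0 * pauli_z 0 (e div D) + pauli_z (a div D) 1 * pauli_z 1 (e div D)
            = ident (a div D) (e div D)"
      using pauli_z_square[OF div2] .
    have IH: "matmul D (clifford_gen p s) (clifford_gen p t) (a mod D) (e mod D)
            + matmul D (clifford_gen p t) (clifford_gen p s) (a mod D) (e mod D)
            = (if s = t \<and> a mod D = e mod D then 2 else 0)"
      using Suc.IH True mod unfolding D_def by blast
    have gen: "clifford_gen (Suc p) s = kron D pauli_z (clifford_gen p s)"
      "clifford_gen (Suc p) t = kron D pauli_z (clifford_gen p t)"
      using True by (simp_all add: D_def)
    have "matmul (2 ^ Suc p) (clifford_gen (Suc p) s) (clifford_gen (Suc p) t) a e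
        + matmul (2 ^ Suc p) (clifford_gen (Suc p) t) (clifford_gen (Suc p) s) a e
        = ident (a div D) (e div D) * (if s = t \<and> a mod D = e mod D then 2 else 0)"
      unfolding DD gen matmul_kron[OF D] z2[symmetric] IH[symmetric] by (simp add: algebra_simps)
    also have "\<dots> = (if s = t \<and> a = e then 2 else 0)"
      unfolding eq_divmod by (simp add: ident_def)
    finally show ?thesis .
  next
    case False
    \<comment> \<open>one factor is \<open>X \<otimes> I\<close> or \<open>Y \<otimes> I\<close>: only the Pauli relations remain\<close>
    show ?thesis
      unfolding DD clifford_gen.simps D_def[symmetric] matmul_kron[OF D]
      using less_2_cases[OF div2(1)] less_2_cases[OF div2(2)] Suc.prems mod False
      by (subst eq_divmod)
        (cases "s < 2 * p"; cases "t < 2 * p"; cases "s = 2 * p"; cases "t = 2 * p";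
         auto simp: pauli_x_def pauli_y_def pauli_z_def ident_def matmul_ident_left matmul_ident_right
           algebra_simps)
  qed
qed

definition clifford_comb ::
    "(nat \<Rightarrow> nat \<Rightarrow> nat \<Rightarrow> complex) \<Rightarrow> nat \<Rightarrow> (nat \<Rightarrow> real) \<Rightarrow> nat \<Rightarrow> nat \<Rightarrow> complex"
  where "clifford_comb G k y a b = (\<Sum>t<k. complex_of_real (y t) * G t a b)"

lemma matmul_clifford_comb:
  "matmul d (clifford_comb G k y) (clifford_comb G k z) a e
     = (\<Sum>t<k. \<Sum>u<k. complex_of_real (y t * z u) * matmul d (G t) (G u) a e)"
proof -
  have "matmul d (clifford_comb G k y) (clifford_comb G k z) a e
      = (\<Sum>b<d. \<Sum>t<k. \<Sum>u<k. complex_of_real (y t * z u) * (G t a b * G u b e))"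
    unfolding matmul_def clifford_comb_def sum_product by (intro sum.cong refl) (simp add: algebra_simps)
  also have "\<dots> = (\<Sum>t<k. \<Sum>u<k. \<Sum>b<d. complex_of_real (y t * z u) * (G t a b * G u b e))"
    by (subst sum.swap) (intro sum.cong refl sum.swap)
  also have "\<dots> = (\<Sum>t<k. \<Sum>u<k. complex_of_real (y t * z u) * matmul d (G t) (G u) a e)"
    unfolding matmul_def by (simp add: sum_distrib_left)
  finally show ?thesis .
qed

lemma hermitian_clifford_comb: "(\<And>t. hermitian (G t)) \<Longrightarrow> hermitian (clifford_comb G k y)"
  unfolding hermitian_def clifford_comb_def by simp

lemma trace_matmul_commute: "(\<Sum>a<d. matmul d A B a a) = (\<Sum>a<d. matmul d B A a a)"
  unfolding matmul_def by (subst sum.swap) (simp add: mult.commute)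

locale clifford_system =
  fixes G :: "nat \<Rightarrow> nat \<Rightarrow> nat \<Rightarrow> complex" and d K :: nat
  assumes d_pos: "0 < d"
    and hermitian_G: "\<And>t. hermitian (G t)"
    and anticommute_G: "\<And>s t a e. s < K \<Longrightarrow> t < K \<Longrightarrow> a < d \<Longrightarrow> e < d \<Longrightarrow>
      matmul d (G s) (G t) a e + matmul d (G t) (G s) a e = (if s = t \<and> a = e then 2 else 0)"
    and trace_G: "\<And>t. t < K \<Longrightarrow> (\<Sum>a<d. G t a a) = 0"

lemma clifford_system_clifford_gen: "clifford_system (clifford_gen p) (2 ^ p) (2 * p)"
  by unfold_locales (simp_all add: hermitian_clifford_gen clifford_gen_anticommute trace_clifford_gen)

context clifford_system
begin

lemma anticommute_clifford_comb:
  assumes k: "k \<le> K" and ae: "a < d" "e < d"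
  shows "matmul d (clifford_comb G k y) (clifford_comb G k z) a e
       + matmul d (clifford_comb G k z) (clifford_comb G k y) a e
       = (if a = e then 2 * complex_of_real (\<Sum>t<k. y t * z t) else 0)"
proof -
  have "matmul d (clifford_comb G k y) (clifford_comb G k z) a e
      + matmul d (clifford_comb G k z) (clifford_comb G k y) a e
      = (\<Sum>t<k. \<Sum>u<k. complex_of_real (y t * z u) *
           (matmul d (G t) (G u) a e + matmul d (G u) (G t) a e))"
    unfolding matmul_clifford_comb
    by (subst (2) sum.swap) (simp add: sum.distrib algebra_simps)
  also have "\<dots> = (\<Sum>t<k. \<Sum>u<k. if u = t then (if a = e then 2 * complex_of_real (y t * z u) else 0) else 0)"
    using k ae by (intro sum.cong refl) (auto simp: anticommute_G)
  also have "\<dots> = (if a = e then 2 * complex_of_real (\<Sum>t<k. y t * z t) else 0)"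
    by (simp add: sum_distrib_left)
  finally show ?thesis .
qed

lemma square_clifford_comb:
  assumes "k \<le> K" "a < d" "e < d"
  shows "matmul d (clifford_comb G k y) (clifford_comb G k y) a e
       = (if a = e then complex_of_real (\<Sum>t<k. (y t)\<^sup>2) else 0)"
  using anticommute_clifford_comb[OF assms, of y y] by (auto simp: power2_eq_square split: if_splits)

lemma trace_clifford_comb:
  assumes "k \<le> K"
  shows "(\<Sum>a<d. clifford_comb G k y a a) = 0"
proof -
  have "(\<Sum>a<d. clifford_comb G k y a a) = (\<Sum>t<k. complex_of_real (y t) * (\<Sum>a<d. G t a a))"
    unfolding clifford_comb_def by (subst sum.swap) (simp add: sum_distrib_left)
  then show ?thesis using assms trace_G by simp
qed

end

section \<open>Positivity and traces of the representing matrices\<close>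

definition sqnorm :: "nat \<Rightarrow> (nat \<Rightarrow> complex) \<Rightarrow> real"
  where "sqnorm d v = (\<Sum>a<d. (cmod (v a))\<^sup>2)"

lemma of_real_sqnorm: "complex_of_real (sqnorm d v) = (\<Sum>a<d. cnj (v a) * v a)"
  unfolding sqnorm_def of_real_sum by (intro sum.cong refl) (metis complex_norm_square mult.commute)

lemma sqnorm_nonneg: "0 \<le> sqnorm d v"
  unfolding sqnorm_def by (simp add: sum_nonneg)

lemma sqnorm_eq_0_imp: "sqnorm d v = 0 \<Longrightarrow> a < d \<Longrightarrow> v a = 0"
  unfolding sqnorm_def using sum_nonneg_eq_0_iff[of "{..<d}" "\<lambda>a. (cmod (v a))\<^sup>2"] by auto

definition mulvec :: "nat \<Rightarrow> (nat \<Rightarrow> nat \<Rightarrow> complex) \<Rightarrow> (nat \<Rightarrow> complex) \<Rightarrow> nat \<Rightarrow> complex"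
  where "mulvec d M v a = (\<Sum>b<d. M a b * v b)"

lemma sqnorm_mulvec_square:
  assumes M: "hermitian M"
    and square: "\<And>a e. a < d \<Longrightarrow> e < d \<Longrightarrow> matmul d M M a e = (if a = e then complex_of_real (s\<^sup>2) else 0)"
  shows "sqnorm d (mulvec d M v) = s\<^sup>2 * sqnorm d v"
proof -
  have M_cnj: "cnj (M a b) = M b a" for a b using M unfolding hermitian_def by auto
  have "complex_of_real (sqnorm d (mulvec d M v))
      = (\<Sum>a<d. \<Sum>b<d. \<Sum>e<d. cnj (v b) * v e * (M b a * M a e))"
    unfolding of_real_sqnorm mulvec_def cnj_sum sum_product
    by (intro sum.cong refl) (simp add: M_cnj algebra_simps)
  also have "\<dots> = (\<Sum>b<d. \<Sum>e<d. \<Sum>a<d. cnj (v b) * v e * (M b a * M a e))"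
    by (subst sum.swap) (intro sum.cong refl sum.swap)
  also have "\<dots> = (\<Sum>b<d. \<Sum>e<d. cnj (v b) * v e * matmul d M M b e)"
    unfolding matmul_def by (simp add: sum_distrib_left)
  also have "\<dots> = (\<Sum>b<d. complex_of_real (s\<^sup>2) * (cnj (v b) * v b))"
    by (intro sum.cong refl) (simp add: square if_distrib cong: if_cong)
  also have "\<dots> = complex_of_real (s\<^sup>2 * sqnorm d v)"
    unfolding of_real_mult of_real_sqnorm by (simp add: sum_distrib_left)
  finally show ?thesis by (simp only: of_real_eq_iff)
qed

text \<open>For \<open>s > 0\<close>: \<open>0 \<le> \<parallel>s v + M v\<parallel>\<^sup>2 = 2 s (s \<parallel>v\<parallel>\<^sup>2 + Re \<langle>v, M v\<rangle>)\<close>, using \<open>\<parallel>M v\<parallel>\<^sup>2 = s\<^sup>2 \<parallel>v\<parallel>\<^sup>2\<close>.\<close>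

lemma re_inner_mulvec_ge:
  assumes M: "hermitian M"
    and square: "\<And>a e. a < d \<Longrightarrow> e < d \<Longrightarrow> matmul d M M a e = (if a = e then complex_of_real (s\<^sup>2) else 0)"
    and s: "0 \<le> s"
  shows "0 \<le> s * sqnorm d v + Re (\<Sum>a<d. cnj (v a) * mulvec d M v a)"
proof -
  define w where "w = mulvec d M v"
  define Q where "Q = (\<Sum>a<d. cnj (v a) * w a)"
  have w_sqnorm: "sqnorm d w = s\<^sup>2 * sqnorm d v"
    unfolding w_def by (rule sqnorm_mulvec_square[OF M square])
  have "0 \<le> s * sqnorm d v + Re Q"
  proof (cases "s = 0")
    case True
    then have "\<And>a. a < d \<Longrightarrow> w a = 0" using w_sqnorm sqnorm_eq_0_imp by simp
    then show ?thesis using True unfolding Q_def by simp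
  next
    case False
    define u where "u a = complex_of_real s * v a + w a" for a
    have cnj_Q: "cnj Q = (\<Sum>a<d. cnj (w a) * v a)" unfolding Q_def by (simp add: mult.commute)
    have "cnj (u a) * u a = complex_of_real (s\<^sup>2) * (cnj (v a) * v a)
        + complex_of_real s * (cnj (v a) * w a + cnj (w a) * v a) + cnj (w a) * w a" for a
      by (simp add: u_def algebra_simps power2_eq_square)
    then have "complex_of_real (sqnorm d u) = complex_of_real (s\<^sup>2) * complex_of_real (sqnorm d v)
        + complex_of_real s * (Q + cnj Q) + complex_of_real (sqnorm d w)"
      unfolding of_real_sqnorm cnj_Q unfolding Q_def
      by (simp only: sum.distrib sum_distrib_left distrib_left)
    then have "Re (complex_of_real (sqnorm d u)) = Re (complex_of_real (s\<^sup>2) * complex_of_real (sqnorm d v)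
        + complex_of_real s * (Q + cnj Q) + complex_of_real (sqnorm d w))"
      by (rule arg_cong)
    then have "sqnorm d u = 2 * s * (s * sqnorm d v + Re Q)"
      unfolding w_sqnorm by (simp add: algebra_simps power2_eq_square)
    then show ?thesis using sqnorm_nonneg[of d u] False s by (simp add: zero_le_mult_iff)
  qed
  then show ?thesis unfolding Q_def w_def .
qed

lemma quadratic_form_shift_nonneg:
  fixes M :: "nat \<Rightarrow> nat \<Rightarrow> complex" and v :: "nat \<Rightarrow> complex" and s c :: real
  assumes M: "hermitian M"
    and square: "\<And>a e. a < d \<Longrightarrow> e < d \<Longrightarrow> matmul d M M a e = (if a = e then complex_of_real (s\<^sup>2) else 0)"
    and s: "0 \<le> s" "s \<le> c"
  shows "0 \<le> Re (\<Sum>a<d. \<Sum>b<d. cnj (v a) * ((if a = b then complex_of_real c else 0) + M a b) * v b)"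
proof -
  have "(\<Sum>b<d. cnj (v a) * ((if a = b then complex_of_real c else 0) + M a b) * v b)
      = complex_of_real c * (cnj (v a) * v a) + cnj (v a) * mulvec d M v a" if a: "a < d" for a
  proof -
    have "(\<Sum>b<d. cnj (v a) * ((if a = b then complex_of_real c else 0) + M a b) * v b)
        = (\<Sum>b<d. if a = b then complex_of_real c * (cnj (v a) * v a) else 0)
          + (\<Sum>b<d. cnj (v a) * (M a b * v b))"
      unfolding sum.distrib[symmetric] by (intro sum.cong refl) (auto simp: algebra_simps)
    then show ?thesis using a unfolding mulvec_def by (simp add: sum_distrib_left)
  qed
  then have "(\<Sum>a<d. \<Sum>b<d. cnj (v a) * ((if a = b then complex_of_real c else 0) + M a b) * v b)
      = complex_of_real (c * sqnorm d v) + (\<Sum>a<d. cnj (v a) * mulvec d M v a)"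
    unfolding of_real_mult of_real_sqnorm by (simp add: sum.distrib sum_distrib_left)
  moreover have "s * sqnorm d v \<le> c * sqnorm d v"
    using s sqnorm_nonneg by (simp add: mult_right_mono)
  ultimately show ?thesis using re_inner_mulvec_ge[OF M square s(1), of v] by simp
qed


context clifford_system
begin

lemma trace_shifted_comb_product:
  assumes k: "k \<le> K"
  shows "(\<Sum>a<d. matmul d (\<lambda>a b. (if a = b then complex_of_real c1 else 0) + clifford_comb G k y a b)
                          (\<lambda>a b. (if a = b then complex_of_real c2 else 0) + clifford_comb G k z a b) a a)
       = of_nat d * complex_of_real (c1 * c2 + (\<Sum>t<k. y t * z t))"
proof -
  let ?M = "clifford_comb G k y" and ?N = "clifford_comb G k z"
  have diag: "matmul d (\<lambda>a b. (if a = b then complex_of_real c1 else 0) + ?M a b)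
                       (\<lambda>a b. (if a = b then complex_of_real c2 else 0) + ?N a b) a a
      = complex_of_real (c1 * c2) + complex_of_real c1 * ?N a a + complex_of_real c2 * ?M a a
        + matmul d ?M ?N a a" if a: "a < d" for a
  proof -
    have "matmul d (\<lambda>a b. (if a = b then complex_of_real c1 else 0) + ?M a b)
                   (\<lambda>a b. (if a = b then complex_of_real c2 else 0) + ?N a b) a a
        = (\<Sum>b<d. if a = b then complex_of_real (c1 * c2) + complex_of_real c1 * ?N a a
                                  + complex_of_real c2 * ?M a a else 0)
          + matmul d ?M ?N a a"
      unfolding matmul_def sum.distrib[symmetric] by (intro sum.cong refl) (auto simp: algebra_simps)
    then show ?thesis using a by simp
  qed
  have "2 * (\<Sum>a<d. matmul d ?M ?N a a) = (\<Sum>a<d. matmul d ?M ?N a a + matmul d ?N ?M a a)"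
    using trace_matmul_commute[of d ?M ?N] by (simp add: sum.distrib)
  also have "\<dots> = of_nat d * (2 * complex_of_real (\<Sum>t<k. y t * z t))"
    using anticommute_clifford_comb[OF k] by simp
  finally have off_diag: "(\<Sum>a<d. matmul d ?M ?N a a) = of_nat d * complex_of_real (\<Sum>t<k. y t * z t)"
    by simp
  have "(\<Sum>a<d. matmul d (\<lambda>a b. (if a = b then complex_of_real c1 else 0) + ?M a b)
                       (\<lambda>a b. (if a = b then complex_of_real c2 else 0) + ?N a b) a a)
      = of_nat d * complex_of_real (c1 * c2) + complex_of_real c1 * (\<Sum>a<d. ?N a a)
        + complex_of_real c2 * (\<Sum>a<d. ?M a a) + (\<Sum>a<d. matmul d ?M ?N a a)"
    using diag by (simp add: sum.distrib sum_distrib_left)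
  then show ?thesis
    unfolding trace_clifford_comb[OF k] off_diag by (simp add: algebra_simps)
qed

end

definition lorentz_rep ::
    "(nat \<Rightarrow> nat \<Rightarrow> nat \<Rightarrow> complex) \<Rightarrow> nat \<Rightarrow> nat \<Rightarrow> real \<Rightarrow> (nat \<Rightarrow> real) \<Rightarrow> complex mat"
  where "lorentz_rep G d k c y = mat d d (\<lambda>(a, b).
           ((if a = b then complex_of_real c else 0) + clifford_comb G k y a b) / sqrt (real d))"

context clifford_system
begin

lemma herm_psd_lorentz_rep:
  assumes k: "k \<le> K" and cone: "sqrt (\<Sum>t<k. (y t)\<^sup>2) \<le> c"
  shows "herm_psd d (lorentz_rep G d k c y)"
  unfolding herm_psd_def
proof (intro conjI allI impI ballI)
  show "lorentz_rep G d k c y \<in> carrier_mat d d" unfolding lorentz_rep_def by simp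
  fix a b assume "a < d" "b < d"
  then show "lorentz_rep G d k c y $$ (a, b) = cnj (lorentz_rep G d k c y $$ (b, a))"
    using hermitian_clifford_comb[where G = G and k = k and y = y, OF hermitian_G]
    unfolding lorentz_rep_def hermitian_def by auto
next
  fix v :: "complex vec"
  let ?N = "\<lambda>a b. (if a = b then complex_of_real c else 0) + clifford_comb G k y a b"
  let ?s = "sqrt (\<Sum>t<k. (y t)\<^sup>2)"
  have square: "matmul d (clifford_comb G k y) (clifford_comb G k y) a e
      = (if a = e then complex_of_real (?s\<^sup>2) else 0)" if "a < d" "e < d" for a e
    using square_clifford_comb[OF k that] by (simp add: sum_nonneg)
  have "0 \<le> Re (\<Sum>a<d. \<Sum>b<d. cnj (v $ a) * ?N a b * v $ b)"
    by (rule quadratic_form_shift_nonneg[where v = "\<lambda>a. v $ a",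
          OF hermitian_clifford_comb[OF hermitian_G] square _ cone]) (simp_all add: sum_nonneg)
  moreover have "(\<Sum>a<d. \<Sum>b<d. cnj (v $ a) * lorentz_rep G d k c y $$ (a, b) * v $ b)
      = (\<Sum>a<d. \<Sum>b<d. cnj (v $ a) * ?N a b * v $ b) / sqrt (real d)"
    unfolding lorentz_rep_def by (simp add: sum_divide_distrib)
  ultimately show "0 \<le> Re (\<Sum>a<d. \<Sum>b<d. cnj (v $ a) * lorentz_rep G d k c y $$ (a, b) * v $ b)"
    using d_pos by (simp add: Re_divide_of_real)
qed

lemma trace_lorentz_rep_product:
  assumes k: "k \<le> K"
  shows "(\<Sum>a<d. (lorentz_rep G d k c1 y * lorentz_rep G d k c2 z) $$ (a, a))
       = complex_of_real (c1 * c2 + (\<Sum>t<k. y t * z t))"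
proof -
  have sqrt_sq: "complex_of_real (sqrt (real d)) * complex_of_real (sqrt (real d)) = of_nat d"
    unfolding of_real_mult[symmetric] by simp
  have "(\<Sum>a<d. (lorentz_rep G d k c1 y * lorentz_rep G d k c2 z) $$ (a, a))
      = (\<Sum>a<d. \<Sum>b<d. ((if a = b then complex_of_real c1 else 0) + clifford_comb G k y a b)
                     * ((if b = a then complex_of_real c2 else 0) + clifford_comb G k z b a)
          / (complex_of_real (sqrt (real d)) * complex_of_real (sqrt (real d))))"
    unfolding lorentz_rep_def by (simp add: scalar_prod_def atLeast0LessThan)
  also have "\<dots> = (\<Sum>a<d. matmul d (\<lambda>a b. (if a = b then complex_of_real c1 else 0) + clifford_comb G k y a b)
                         (\<lambda>a b. (if a = b then complex_of_real c2 else 0) + clifford_comb G k z a b) a a)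
        / of_nat d"
    unfolding sqrt_sq matmul_def by (simp add: sum_divide_distrib)
  also have "\<dots> = complex_of_real (c1 * c2 + (\<Sum>t<k. y t * z t))"
    unfolding trace_shifted_comb_product[OF k] using d_pos by simp
  finally show ?thesis .
qed

end

theorem theorem4p8:
  fixes n :: nat and X :: "real mat"
  assumes "gram_lorentz n X"
  shows "cpsd n X \<and> cpsd_rank n X \<le> 2 ^ ((vec_space.rank n X + 1) div 2)"
proof -
  let ?r = "vec_space.rank n X"
  define p where "p = (?r + 1) div 2"
  obtain c y where X_eq: "\<And>i j. i < n \<Longrightarrow> j < n \<Longrightarrow> X $$ (i, j) = c i * c j + (\<Sum>t<?r. y i t * y j t)"
    and cone: "\<And>i. i < n \<Longrightarrow> sqrt (\<Sum>t<?r. (y i t)\<^sup>2) \<le> c i"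
    by (rule gram_lorentz_decomposition[OF assms]) (rule that)
  interpret clifford_system "clifford_gen p" "2 ^ p" "2 * p"
    by (rule clifford_system_clifford_gen)
  have r: "?r \<le> 2 * p" unfolding p_def by simp
  have factor: "cpsd_factor n (2 ^ p) X"
    unfolding cpsd_factor_def
    using herm_psd_lorentz_rep[OF r cone] trace_lorentz_rep_product[OF r] X_eq
    by (intro conjI exI[of _ "\<lambda>i. lorentz_rep (clifford_gen p) (2 ^ p) ?r (c i) (y i)"] allI impI) simp_all
  have "cpsd_rank n X \<le> 2 ^ p"
    unfolding cpsd_rank_def by (rule Least_le) (rule factor)
  moreover have "X \<in> carrier_mat n n" using assms unfolding gram_lorentz_def by blast
  ultimately show ?thesis
    using factor unfolding cpsd_def p_def by blast
qed

end
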